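(* Let $\Omega\subset\mathbb{R}^n$ ($n\ge3$) be a bounded Lipschitz domain and assume: $p_0,p_1$ measurable with $2\le p_0^-\le p_0\le p_0^+<\infty$, $1<p_1^-\le p_1\le p_1^+<\infty$, $p_0\in C^1(\bar\Omega)$, $p_1\in C^0(\bar\Omega)$; $\alpha$ measurable with $1\le\alpha^-\le\alpha\le\alpha^+<\infty$ and $\alpha\ge p_0+\varepsilon$ for some $\varepsilon>0$; $c$ Carathéodory with $|c(x,\tau)|\le c_0|\tau|^{\alpha-1}+c_1$, $c(x,\tau)\tau\ge c_2|\tau|^{\alpha}$, with $c_0,c_2\in L^\infty(\Omega)$, $c_1\in L^{\alpha'(x)}(\Omega)$ nonnegative and $c_2\ge\tilde C>0$. Then the operator $B$ defined by $$\langle B(u),v\rangle=\sum_{i=1}^n\int_\Omega|u|^{p_0(x)-2}D_iu\,D_iv\,dx+\int_\Omega c(x,u)v\,dx$$ (i.e. $B(u)=-\sum_iD_i(|u|^{p_0-2}D_iu)+c(x,u)$) is a bounded operator from $\mathring S_{1,q_0(x)(p_0(x)-2),q_0(x),\alpha(x)}(\Omega)$ into $W^{-1,q_0(x)}(\Omega)+L^{\alpha'(x)}(\Omega)$.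
   Context: $D_i=\partial/\partial x_i$; $q_0=p_0/(p_0-1)$, $\alpha'=\alpha/(\alpha-1)$; $W^{-1,q_0(x)}(\Omega)=(W_0^{1,p_0(x)}(\Omega))^*$; $L^{p(x)}$ denotes variable exponent Lebesgue spaces. For measurable $\gamma,\beta,\theta$, $S_{1,\gamma(x),\beta(x),\theta(x)}(\Omega)=\{u\in L^1(\Omega):\int_\Omega|u|^{\theta(x)}dx+\sum_{i=1}^n\int_\Omega|u|^{\gamma(x)}|D_iu|^{\beta(x)}dx<\infty\}$, with pseudo-norm $[u]=\inf\{\lambda>0:\int_\Omega|u/\lambda|^{\theta(x)}dx+\sum_i\int_\Omega\big|\,|u|^{\gamma/\beta}D_iu/\lambda^{\gamma/\beta+1}\big|^{\beta(x)}dx\le1\}$; $\mathring S$ denotes the subset of functions vanishing on $\partial\Omega$. Boundedness means bounded sets (with respect to this pseudo-norm) are mapped into bounded sets. *)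

theory Defs
  imports "HOL-Analysis.Analysis"
begin

(* power with the convention 0^0 = 1 (Isabelle's powr has 0 powr 0 = 0); used for t >= 0 *)
definition pw :: "real \<Rightarrow> real \<Rightarrow> real" where
  "pw t a = (if a = 0 then 1 else t powr a)"

definition pd :: "'n::finite \<Rightarrow> (real^'n \<Rightarrow> real) \<Rightarrow> real^'n \<Rightarrow> real" where
  "pd i f x = frechet_derivative f (at x) (axis i 1)"

fun iter_pd :: "'n::finite list \<Rightarrow> (real^'n \<Rightarrow> real) \<Rightarrow> real^'n \<Rightarrow> real" where
  "iter_pd [] f = f"
| "iter_pd (i # is) f = pd i (iter_pd is f)"

definition smooth_fun :: "(real^'n::finite \<Rightarrow> real) \<Rightarrow> bool" where
  "smooth_fun f \<longleftrightarrow> (\<forall>is x. iter_pd is f differentiable (at x))"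

definition test_fun :: "(real^'n::finite) set \<Rightarrow> (real^'n \<Rightarrow> real) \<Rightarrow> bool" where
  "test_fun \<Omega> \<phi> \<longleftrightarrow> smooth_fun \<phi> \<and> compact (closure {x. \<phi> x \<noteq> 0})
      \<and> closure {x. \<phi> x \<noteq> 0} \<subseteq> \<Omega>"

definition loc_integrable :: "(real^'n::finite) set \<Rightarrow> (real^'n \<Rightarrow> real) \<Rightarrow> bool" where
  "loc_integrable \<Omega> f \<longleftrightarrow> (\<forall>K. compact K \<and> K \<subseteq> \<Omega> \<longrightarrow> integrable (lebesgue_on K) f)"

definition weak_deriv :: "(real^'n::finite) set \<Rightarrow> 'n \<Rightarrow> (real^'n \<Rightarrow> real) \<Rightarrow> (real^'n \<Rightarrow> real) \<Rightarrow> bool" where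
  "weak_deriv \<Omega> i u g \<longleftrightarrow> loc_integrable \<Omega> u \<and> loc_integrable \<Omega> g \<and>
     (\<forall>\<phi>. test_fun \<Omega> \<phi> \<longrightarrow>
        (\<integral>x. u x * pd i \<phi> x \<partial>lebesgue_on \<Omega>) = - (\<integral>x. g x * \<phi> x \<partial>lebesgue_on \<Omega>))"

definition zero_ext :: "'a set \<Rightarrow> ('a \<Rightarrow> real) \<Rightarrow> 'a \<Rightarrow> real" where
  "zero_ext \<Omega> f x = (if x \<in> \<Omega> then f x else 0)"

definition lipschitz_domain :: "(real^'n::finite) set \<Rightarrow> bool" where
  "lipschitz_domain \<Omega> \<longleftrightarrow> open \<Omega> \<and> connected \<Omega> \<and> \<Omega> \<noteq> {} \<and>
     (\<forall>x0\<in>frontier \<Omega>. \<exists>r>0. \<exists>e. norm e = 1 \<and> (\<exists>L (\<gamma>::real^'n \<Rightarrow> real). L-lipschitz_on UNIV \<gamma> \<and>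
        (\<forall>y. \<gamma> y = \<gamma> (y - (y \<bullet> e) *\<^sub>R e)) \<and>
        \<Omega> \<inter> ball x0 r = {y \<in> ball x0 r. y \<bullet> e < \<gamma> y}))"

definition Lvar :: "(real^'n::finite) set \<Rightarrow> (real^'n \<Rightarrow> real) \<Rightarrow> (real^'n \<Rightarrow> real) \<Rightarrow> bool" where
  "Lvar \<Omega> p f \<longleftrightarrow> f \<in> borel_measurable (lebesgue_on \<Omega>) \<and>
     (\<exists>s>0. integrable (lebesgue_on \<Omega>) (\<lambda>x. pw (\<bar>f x\<bar> / s) (p x)))"

definition lux :: "(real^'n::finite) set \<Rightarrow> (real^'n \<Rightarrow> real) \<Rightarrow> (real^'n \<Rightarrow> real) \<Rightarrow> real" where
  "lux \<Omega> p f = Inf {s. s > 0 \<and> integrable (lebesgue_on \<Omega>) (\<lambda>x. pw (\<bar>f x\<bar> / s) (p x))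
       \<and> (\<integral>x. pw (\<bar>f x\<bar> / s) (p x) \<partial>lebesgue_on \<Omega>) \<le> 1}"

definition S_mem :: "(real^'n::finite) set \<Rightarrow> (real^'n \<Rightarrow> real) \<Rightarrow> (real^'n \<Rightarrow> real) \<Rightarrow>
    (real^'n \<Rightarrow> real) \<Rightarrow> (real^'n \<Rightarrow> real) \<Rightarrow> ('n \<Rightarrow> real^'n \<Rightarrow> real) \<Rightarrow> bool" where
  "S_mem \<Omega> \<gamma> \<beta> \<theta> u Du \<longleftrightarrow> integrable (lebesgue_on \<Omega>) u \<and>
     (\<forall>i. weak_deriv \<Omega> i u (Du i)) \<and>
     integrable (lebesgue_on \<Omega>) (\<lambda>x. pw \<bar>u x\<bar> (\<theta> x)) \<and>
     (\<forall>i. integrable (lebesgue_on \<Omega>) (\<lambda>x. pw \<bar>u x\<bar> (\<gamma> x) * pw \<bar>Du i x\<bar> (\<beta> x)))"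

(* membership in the subset of functions vanishing on the boundary: the zero extension
   of u is weakly differentiable on R^n with derivatives the zero extensions of D_i u *)
definition S0_mem :: "(real^'n::finite) set \<Rightarrow> (real^'n \<Rightarrow> real) \<Rightarrow> (real^'n \<Rightarrow> real) \<Rightarrow>
    (real^'n \<Rightarrow> real) \<Rightarrow> (real^'n \<Rightarrow> real) \<Rightarrow> ('n \<Rightarrow> real^'n \<Rightarrow> real) \<Rightarrow> bool" where
  "S0_mem \<Omega> \<gamma> \<beta> \<theta> u Du \<longleftrightarrow> S_mem \<Omega> \<gamma> \<beta> \<theta> u Du \<and>
     (\<forall>i. weak_deriv UNIV i (zero_ext \<Omega> u) (zero_ext \<Omega> (Du i)))"

definition S_pnorm :: "(real^'n::finite) set \<Rightarrow> (real^'n \<Rightarrow> real) \<Rightarrow> (real^'n \<Rightarrow> real) \<Rightarrow>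
    (real^'n \<Rightarrow> real) \<Rightarrow> (real^'n \<Rightarrow> real) \<Rightarrow> ('n \<Rightarrow> real^'n \<Rightarrow> real) \<Rightarrow> real" where
  "S_pnorm \<Omega> \<gamma> \<beta> \<theta> u Du = Inf {s. s > 0 \<and>
     (\<integral>x. pw (\<bar>u x\<bar> / s) (\<theta> x) \<partial>lebesgue_on \<Omega>) +
     (\<Sum>i\<in>UNIV. \<integral>x. pw \<bar>pw \<bar>u x\<bar> (\<gamma> x / \<beta> x) * Du i x / pw s (\<gamma> x / \<beta> x + 1)\<bar> (\<beta> x)
        \<partial>lebesgue_on \<Omega>) \<le> 1}"

definition sob_norm :: "(real^'n::finite) set \<Rightarrow> (real^'n \<Rightarrow> real) \<Rightarrow> (real^'n \<Rightarrow> real) \<Rightarrow> real" where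
  "sob_norm \<Omega> p \<phi> = lux \<Omega> p \<phi> + (\<Sum>i\<in>UNIV. lux \<Omega> p (pd i \<phi>))"

end

theory Submission
  imports Defs
begin

text \<open>
  A pseudo-norm bound \<open>[u] \<le> M\<close> bounds both modulars \<open>\<integral>|u|\<^sup>\<alpha>\<close> and \<open>\<integral>||u|\<^sup>p\<^sup>0\<^sup>-\<^sup>2 D\<^sub>iu|\<^sup>q\<^sup>0\<close> by
  \<open>max 1 (M + 1) powr E\<close>, where \<open>E\<close> bounds \<open>p\<^sub>0\<close> and \<open>\<alpha>\<close>: some admissible scale \<open>s < M + 1\<close> has scaled
  modular at most 1, and rescaling costs at most \<open>max 1 s\<^sup>E\<close>. For the principal part, Young's inequality
  \<open>ab \<le> a\<^sup>q\<^sup>0 + b\<^sup>p\<^sup>0\<close> at every Luxemburg scale of \<open>D\<^sub>i\<phi>\<close> gives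
  \<open>|\<integral>|u|\<^sup>p\<^sup>0\<^sup>-\<^sup>2 D\<^sub>iu D\<^sub>i\<phi>| \<le> (\<integral>||u|\<^sup>p\<^sup>0\<^sup>-\<^sup>2 D\<^sub>iu|\<^sup>q\<^sup>0 + 1) \<parallel>D\<^sub>i\<phi>\<parallel>\<^sub>p\<^sub>0\<close>, a bounded functional on \<open>W\<^sub>0\<^sup>1\<^sup>,\<^sup>p\<^sup>0\<close>.
  For the lower-order part, the growth condition bounds the \<open>\<alpha>'\<close>-modular of \<open>c(x, u)\<close> at scale
  \<open>\<lambda> max 1 s\<^sub>1\<close> by \<open>4 (C\<^sub>0\<^sup>2 \<integral>|u|\<^sup>\<alpha> + \<integral>|c\<^sub>1/s\<^sub>1|\<^sup>\<alpha>\<^sup>') / \<lambda>\<close>, which is at most 1 for a suitable \<open>\<lambda>\<close>.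

  Of the hypotheses only openness of \<open>\<Omega>\<close> (from the Lipschitz condition), its boundedness, the bounds on
  \<open>p\<^sub>0\<close> and \<open>\<alpha>\<close> with \<open>\<alpha> \<ge> p\<^sub>0 \<ge> 2\<close>, and the Carath\'eodory and growth conditions on \<open>c\<close> are needed.
\<close>

lemma pw_nonneg: "0 \<le> pw t a"
  by (simp add: pw_def)

lemma pw_measurable [measurable]:
  fixes f a :: "'a \<Rightarrow> real"
  assumes [measurable]: "f \<in> borel_measurable M" "a \<in> borel_measurable M"
  shows "(\<lambda>x. pw (f x) (a x)) \<in> borel_measurable M"
  unfolding pw_def by measurable

lemma pw_divide: "0 \<le> t \<Longrightarrow> 0 < s \<Longrightarrow> pw (t / s) a = pw t a / s powr a"
  by (simp add: pw_def powr_divide)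

lemma pw_mult_pw:
  assumes "0 \<le> a" "0 \<le> E" "0 < q"
  shows "pw (pw a E * \<bar>d\<bar>) q = pw a (q * E) * pw \<bar>d\<bar> q"
  using assms by (cases "E = 0"; cases "a = 0") (simp_all add: pw_def powr_mult powr_powr mult.commute)

lemma divide_powr_le:
  fixes t l r :: real
  assumes "0 \<le> t" "1 \<le> l" "1 \<le> r"
  shows "(t / l) powr r \<le> t powr r / l"
proof -
  have "l \<le> l powr r" using powr_mono[of 1 r l] assms by simp
  then show ?thesis using assms by (simp add: powr_divide divide_left_mono)
qed

lemma powr_add_le_4:
  fixes X Y r :: real
  assumes "0 \<le> X" "0 \<le> Y" "0 < r" "r \<le> 2"
  shows "(X + Y) powr r \<le> 4 * (X powr r + Y powr r)"
proof -
  define m where "m = max X Y"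
  have "(X + Y) powr r \<le> (2 * m) powr r" using assms by (intro powr_mono2) (auto simp: m_def)
  also have "\<dots> = 2 powr r * m powr r" using assms by (simp add: powr_mult m_def)
  also have "2 powr r \<le> 2 powr (2::real)" using assms by (intro powr_mono) auto
  then have "2 powr r * m powr r \<le> 4 * m powr r" by (simp add: mult_right_mono)
  also have "m powr r \<le> X powr r + Y powr r" by (simp add: m_def max_def)
  finally show ?thesis by simp
qed

lemma mult_le_powr_conj_add_powr:
  fixes a b p :: real
  assumes "0 \<le> a" "0 \<le> b" "2 \<le> p"
  shows "a * b \<le> a powr (p / (p - 1)) + b powr p"
proof -
  have "a * b \<le> a powr (p / (p - 1)) / (p / (p - 1)) + b powr p / p"
    using assms by (intro Youngs_inequality) (auto simp: field_simps)
  also have "\<dots> \<le> a powr (p / (p - 1)) + b powr p"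
  proof (intro add_mono)
    have "1 \<le> p / (p - 1)" using assms by simp
    then show "a powr (p / (p - 1)) / (p / (p - 1)) \<le> a powr (p / (p - 1))"
      using divide_left_mono[of 1 "p / (p - 1)" "a powr (p / (p - 1))"] by simp
    show "b powr p / p \<le> b powr p"
      using divide_left_mono[of 1 p "b powr p"] assms by simp
  qed
  finally show ?thesis .
qed

text \<open>The density \<open>\<bar>\<bar>a\<bar>\<^sup>p\<^sup>-\<^sup>2 d\<bar>\<^sup>q\<close> with \<open>q = p/(p-1)\<close>, for \<open>a \<ge> 0\<close>.\<close>
definition flux_power :: "real \<Rightarrow> real \<Rightarrow> real \<Rightarrow> real" where
  "flux_power p a d = pw a (p / (p - 1) * (p - 2)) * pw \<bar>d\<bar> (p / (p - 1))"

lemma flux_power_nonneg: "0 \<le> flux_power p a d"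
  by (simp add: flux_power_def pw_nonneg)

lemma abs_flux_mult_le:
  fixes a d b s p :: real
  assumes "0 \<le> a" "0 < s" "2 \<le> p"
  shows "\<bar>pw a (p - 2) * d * b\<bar> \<le> s * (flux_power p a d + pw (\<bar>b\<bar> / s) p)"
proof -
  have "\<bar>pw a (p - 2) * d * b\<bar> = s * ((pw a (p - 2) * \<bar>d\<bar>) * (\<bar>b\<bar> / s))"
    using assms by (simp add: abs_mult pw_nonneg)
  also have "\<dots> \<le> s * ((pw a (p - 2) * \<bar>d\<bar>) powr (p / (p - 1)) + (\<bar>b\<bar> / s) powr p)"
    using assms by (intro mult_left_mono mult_le_powr_conj_add_powr) (auto simp: pw_nonneg)
  also have "(pw a (p - 2) * \<bar>d\<bar>) powr (p / (p - 1)) = flux_power p a d"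
    using pw_mult_pw[of a "p - 2" "p / (p - 1)" d] assms by (simp add: pw_def flux_power_def)
  also have "(\<bar>b\<bar> / s) powr p = pw (\<bar>b\<bar> / s) p" using assms by (simp add: pw_def)
  finally show ?thesis .
qed

lemma growth_modular_le:
  fixes G a b0 b1 al C lam s1 :: real
  assumes G: "\<bar>G\<bar> \<le> b0 * pw a (al - 1) + b1" and b0: "b0 \<le> C" "1 \<le> C"
    and a: "0 \<le> a" and b1: "0 \<le> b1" and al: "2 \<le> al" and s1: "0 < s1" and lam: "1 \<le> lam"
  shows "pw (\<bar>G\<bar> / (lam * max 1 s1)) (al / (al - 1))
    \<le> 4 * (C\<^sup>2 * pw a al + pw (b1 / s1) (al / (al - 1))) / lam"
proof -
  define r where "r = al / (al - 1)"
  define sg where "sg = lam * max 1 s1"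
  have r: "1 \<le> r" "r \<le> 2" and ar: "(al - 1) * r = al" using al by (auto simp: r_def field_simps)
  have sg: "lam \<le> sg" "lam \<le> sg / s1"
    using lam s1 mult_left_mono[of 1 "max 1 s1" lam] mult_left_mono[of 1 "max 1 s1 / s1" lam]
    by (auto simp: sg_def)
  define X where "X = C * a powr (al - 1) / sg"
  define Y where "Y = b1 / sg"
  have "\<bar>G\<bar> \<le> C * a powr (al - 1) + b1"
    using G b0 al mult_right_mono[OF b0(1), of "a powr (al - 1)"] by (simp add: pw_def)
  then have "\<bar>G\<bar> / sg \<le> X + Y"
    using sg lam by (simp add: X_def Y_def divide_right_mono add_divide_distrib[symmetric])
  then have "pw (\<bar>G\<bar> / sg) r \<le> (X + Y) powr r"
    using r sg lam by (intro order.trans[OF eq_refl powr_mono2]) (auto simp: pw_def)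
  also have "\<dots> \<le> 4 * (X powr r + Y powr r)"
    using r sg lam b0 b1 by (intro powr_add_le_4) (auto simp: X_def Y_def)
  also have "X powr r \<le> C\<^sup>2 * pw a al / lam"
  proof -
    have "X powr r \<le> (C * a powr (al - 1)) powr r / sg"
      unfolding X_def using b0 sg lam r by (intro divide_powr_le) auto
    also have "\<dots> = C powr r * pw a al / sg"
      using b0 a al by (simp add: powr_mult powr_powr ar pw_def)
    also have "\<dots> \<le> C\<^sup>2 * pw a al / lam"
    proof (intro frac_le mult_right_mono)
      have "C powr r \<le> C powr (2::real)" using b0 r by (intro powr_mono) auto
      then show "C powr r \<le> C\<^sup>2" using b0 by (simp add: powr_numeral)
    qed (use b0 sg lam in \<open>auto simp: pw_nonneg\<close>)
    finally show ?thesis .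
  qed
  also have "Y powr r \<le> pw (b1 / s1) r / lam"
  proof -
    have "Y powr r \<le> (b1 / s1) powr r / (sg / s1)"
    proof -
      have "1 \<le> sg / s1" using sg lam by linarith
      then show ?thesis
        unfolding Y_def using divide_powr_le[of "b1 / s1" "sg / s1" r] b1 s1 r by simp
    qed
    also have "\<dots> \<le> (b1 / s1) powr r / lam"
      using sg lam s1 by (intro divide_left_mono) auto
    finally show ?thesis using r by (simp add: pw_def)
  qed
  finally show ?thesis by (simp add: r_def sg_def add_divide_distrib)
qed

lemma borel_measurable_if_loc_integrable_UNIV:
  fixes f :: "'a::euclidean_space \<Rightarrow> real"
  assumes "\<And>K. compact K \<Longrightarrow> integrable (lebesgue_on K) f"
  shows "f \<in> borel_measurable lebesgue"
proof (rule borel_measurable_LIMSEQ_real)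
  fix k :: nat
  have "f \<in> borel_measurable (lebesgue_on (cball 0 (real k)))"
    using assms by (simp add: borel_measurable_integrable)
  then show "(\<lambda>x. indicator (cball 0 (real k)) x *\<^sub>R f x) \<in> borel_measurable lebesgue"
    by (subst (asm) borel_measurable_restrict_space_iff) auto
next
  fix x :: 'a
  have "\<forall>\<^sub>F k in sequentially. indicator (cball 0 (real k)) x *\<^sub>R f x = f x"
  proof (rule eventually_sequentiallyI[of "nat \<lceil>norm x\<rceil>"])
    fix k assume "nat \<lceil>norm x\<rceil> \<le> k"
    then have "norm x \<le> real k" by linarith
    then show "indicator (cball 0 (real k)) x *\<^sub>R f x = f x" by (simp add: indicator_def)
  qed
  then show "(\<lambda>k. indicator (cball 0 (real k)) x *\<^sub>R f x) \<longlonglongrightarrow> f x"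
    by (rule tendsto_eventually)
qed

lemma borel_measurable_if_weak_deriv_zero_ext:
  fixes \<Omega> :: "(real^'n::finite) set"
  assumes "open \<Omega>" "weak_deriv UNIV i (zero_ext \<Omega> u) (zero_ext \<Omega> g)"
  shows "g \<in> borel_measurable (lebesgue_on \<Omega>)"
proof -
  have "zero_ext \<Omega> g \<in> borel_measurable lebesgue"
    using assms(2) by (intro borel_measurable_if_loc_integrable_UNIV) (simp add: weak_deriv_def loc_integrable_def)
  moreover have "zero_ext \<Omega> g = (\<lambda>x. indicator \<Omega> x *\<^sub>R g x)"
    by (auto simp: zero_ext_def indicator_def)
  ultimately show ?thesis
    using assms(1) by (subst borel_measurable_restrict_space_iff) (auto simp: borel_open)
qed

lemma LIMSEQ_floor_mult_divide:
  fixes t :: real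
  shows "(\<lambda>k. real_of_int \<lfloor>real (Suc k) * t\<rfloor> / real (Suc k)) \<longlonglongrightarrow> t"
proof (rule tendsto_sandwich[of "\<lambda>k. t - 1 / real (Suc k)" _ sequentially "\<lambda>k. t"])
  show "\<forall>\<^sub>F k in sequentially. t - 1 / real (Suc k) \<le> real_of_int \<lfloor>real (Suc k) * t\<rfloor> / real (Suc k)"
  proof (intro always_eventually allI)
    fix k
    have "real (Suc k) * t - 1 \<le> real_of_int \<lfloor>real (Suc k) * t\<rfloor>" by linarith
    then have "(real (Suc k) * t - 1) / real (Suc k) \<le> real_of_int \<lfloor>real (Suc k) * t\<rfloor> / real (Suc k)"
      by (rule divide_right_mono) simp
    then show "t - 1 / real (Suc k) \<le> real_of_int \<lfloor>real (Suc k) * t\<rfloor> / real (Suc k)"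
      by (simp add: diff_divide_distrib)
  qed
  show "\<forall>\<^sub>F k in sequentially. real_of_int \<lfloor>real (Suc k) * t\<rfloor> / real (Suc k) \<le> t"
    by (intro always_eventually allI) (simp add: divide_le_eq mult.commute)
  show "(\<lambda>k. t - 1 / real (Suc k)) \<longlonglongrightarrow> t"
    using tendsto_diff[OF tendsto_const LIMSEQ_inverse_real_of_nat, of t] by (simp add: inverse_eq_divide)
qed simp

text \<open>Compose \<open>c\<close> with the countably-valued approximations \<open>\<lfloor>k u\<rfloor>/k\<close> of \<open>u\<close> and pass to the
  limit off the null set where \<open>c x\<close> fails to be continuous.\<close>
lemma borel_measurable_caratheodory:
  fixes \<Omega> :: "'a::euclidean_space set" and c :: "'a \<Rightarrow> real \<Rightarrow> real"
  assumes \<Omega>: "\<Omega> \<in> sets lebesgue"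
    and c_meas: "\<And>\<tau>. (\<lambda>x. c x \<tau>) \<in> borel_measurable (lebesgue_on \<Omega>)"
    and c_cont: "AE x in lebesgue_on \<Omega>. continuous_on UNIV (c x)"
    and u: "u \<in> borel_measurable (lebesgue_on \<Omega>)"
  shows "(\<lambda>x. c x (u x)) \<in> borel_measurable (lebesgue_on \<Omega>)"
proof -
  define cz where "cz \<tau> x = indicator \<Omega> x * c x \<tau>" for \<tau> x
  define uz where "uz x = indicator \<Omega> x * u x" for x
  have cz: "cz \<tau> \<in> borel_measurable lebesgue" for \<tau>
    using c_meas \<Omega> unfolding cz_def by (subst (asm) borel_measurable_restrict_space_iff) auto
  have [measurable]: "uz \<in> borel_measurable lebesgue"
    using u \<Omega> unfolding uz_def by (subst (asm) borel_measurable_restrict_space_iff) auto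
  define h where "h k x = cz (real_of_int \<lfloor>real (Suc k) * uz x\<rfloor> / real (Suc k)) x" for k x
  have h: "h k \<in> borel_measurable lebesgue" for k
    unfolding h_def
    by (rule measurable_compose_countable[where f="\<lambda>j x. cz (real_of_int j / real (Suc k)) x", OF cz])
      measurable
  obtain N where N: "N \<in> null_sets lebesgue" "\<And>x. x \<notin> N \<Longrightarrow> x \<in> \<Omega> \<Longrightarrow> continuous_on UNIV (c x)"
    using c_cont \<Omega> by (subst (asm) AE_restrict_space_iff) (auto simp: eventually_ae_filter)
  define G where "G x = indicator (- N) x * (indicator \<Omega> x * c x (u x))" for x
  have "G \<in> borel_measurable lebesgue"
  proof (rule borel_measurable_LIMSEQ_real[where u="\<lambda>k x. indicator (- N) x * h k x"])
    show "(\<lambda>x. indicator (- N) x * h k x) \<in> borel_measurable lebesgue" for k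
      using h sets.compl_sets[OF null_setsD2[OF N(1)]]
      by (intro borel_measurable_times borel_measurable_indicator) (auto simp: Compl_eq_Diff_UNIV)
  next
    fix x
    show "(\<lambda>k. indicator (- N) x * h k x) \<longlonglongrightarrow> G x"
    proof (cases "x \<notin> N \<and> x \<in> \<Omega>")
      case True
      then have "(\<lambda>k. c x (real_of_int \<lfloor>real (Suc k) * u x\<rfloor> / real (Suc k))) \<longlonglongrightarrow> c x (u x)"
        using continuous_on_tendsto_compose[OF N(2) LIMSEQ_floor_mult_divide] by simp
      then show ?thesis using True by (simp add: G_def h_def cz_def uz_def)
    qed (auto simp: G_def h_def cz_def indicator_def)
  qed
  moreover have "AE x in lebesgue. G x = indicator \<Omega> x *\<^sub>R c x (u x)"
    using N(1) by (rule AE_I') (auto simp: G_def indicator_def)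
  ultimately have "(\<lambda>x. indicator \<Omega> x *\<^sub>R c x (u x)) \<in> borel_measurable lebesgue"
    by (rule borel_measurable_AE)
  then show ?thesis using \<Omega> by (subst borel_measurable_restrict_space_iff) auto
qed

definition lux_scales :: "(real^'n::finite) set \<Rightarrow> (real^'n \<Rightarrow> real) \<Rightarrow> (real^'n \<Rightarrow> real) \<Rightarrow> real set" where
  "lux_scales \<Omega> p f = {s. s > 0 \<and> integrable (lebesgue_on \<Omega>) (\<lambda>x. pw (\<bar>f x\<bar> / s) (p x))
       \<and> (\<integral>x. pw (\<bar>f x\<bar> / s) (p x) \<partial>lebesgue_on \<Omega>) \<le> 1}"

lemma lux_eq_Inf_lux_scales: "lux \<Omega> p f = Inf (lux_scales \<Omega> p f)"
  unfolding lux_def lux_scales_def by simp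

lemma bdd_below_lux_scales: "bdd_below (lux_scales \<Omega> p f)"
  by (rule bdd_belowI[of _ 0]) (simp add: lux_scales_def)

lemma lux_le: "s \<in> lux_scales \<Omega> p f \<Longrightarrow> lux \<Omega> p f \<le> s"
  unfolding lux_eq_Inf_lux_scales by (rule cInf_lower[OF _ bdd_below_lux_scales])

lemma lux_nonneg: "lux_scales \<Omega> p f \<noteq> {} \<Longrightarrow> 0 \<le> lux \<Omega> p f"
  unfolding lux_eq_Inf_lux_scales by (rule cInf_greatest) (auto simp: lux_scales_def)

lemma le_lux_mult:
  assumes "lux_scales \<Omega> p f \<noteq> {}" "0 < k" "\<And>s. s \<in> lux_scales \<Omega> p f \<Longrightarrow> X \<le> s * k"
  shows "X \<le> lux \<Omega> p f * k"
proof -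
  have "X / k \<le> lux \<Omega> p f"
    unfolding lux_eq_Inf_lux_scales using assms by (intro cInf_greatest) (auto simp: pos_divide_le_eq)
  then show ?thesis using assms(2) by (simp add: pos_divide_le_eq)
qed

lemma mem_lux_scales_if_AE_le:
  fixes \<Omega> :: "(real^'n::finite) set"
  assumes "0 < s" "f \<in> borel_measurable (lebesgue_on \<Omega>)" "p \<in> borel_measurable (lebesgue_on \<Omega>)"
    and b: "AE x in lebesgue_on \<Omega>. pw (\<bar>f x\<bar> / s) (p x) \<le> b x" "integrable (lebesgue_on \<Omega>) b"
      "(\<integral>x. b x \<partial>lebesgue_on \<Omega>) \<le> 1"
  shows "s \<in> lux_scales \<Omega> p f"
proof -
  have "AE x in lebesgue_on \<Omega>. norm (pw (\<bar>f x\<bar> / s) (p x)) \<le> norm (b x)"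
    using b(1) by eventually_elim (simp add: pw_nonneg)
  moreover have "(\<lambda>x. pw (\<bar>f x\<bar> / s) (p x)) \<in> borel_measurable (lebesgue_on \<Omega>)"
    using assms(2,3) by simp
  ultimately have int: "integrable (lebesgue_on \<Omega>) (\<lambda>x. pw (\<bar>f x\<bar> / s) (p x))"
    by (intro Bochner_Integration.integrable_bound[OF b(2)])
  have "(\<integral>x. pw (\<bar>f x\<bar> / s) (p x) \<partial>lebesgue_on \<Omega>) \<le> (\<integral>x. b x \<partial>lebesgue_on \<Omega>)"
    using b(1) by (intro integral_mono_AE int b(2))
  then show ?thesis using int assms(1) b(3) by (simp add: lux_scales_def)
qed

lemma lux_scales_nonempty_if_bounded:
  fixes \<Omega> :: "(real^'n::finite) set"
  assumes \<Omega>: "bounded \<Omega>" "\<Omega> \<in> sets lebesgue"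
    and f: "f \<in> borel_measurable (lebesgue_on \<Omega>)" "\<And>x. x \<in> \<Omega> \<Longrightarrow> \<bar>f x\<bar> \<le> B"
    and p: "p \<in> borel_measurable (lebesgue_on \<Omega>)" "\<And>x. x \<in> \<Omega> \<Longrightarrow> 1 \<le> p x"
  shows "lux_scales \<Omega> p f \<noteq> {}"
proof -
  interpret finite_measure "lebesgue_on \<Omega>"
    using \<Omega> by (intro finite_measure_lebesgue_on bounded_set_imp_lmeasurable)
  define \<mu> where "\<mu> = measure (lebesgue_on \<Omega>) \<Omega>"
  define s where "s = max 1 B * (\<mu> + 1)"
  have \<mu>: "0 \<le> \<mu>" by (simp add: \<mu>_def)
  have "pw (\<bar>f x\<bar> / s) (p x) \<le> 1 / (\<mu> + 1)" if x: "x \<in> \<Omega>" for x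
  proof -
    have "\<bar>f x\<bar> \<le> max 1 B" using f(2)[OF x] by simp
    then have "\<bar>f x\<bar> / s \<le> 1 / (\<mu> + 1)" using \<mu> by (simp add: s_def divide_le_eq)
    moreover have "\<dots> \<le> 1" using \<mu> by simp
    moreover have "(\<bar>f x\<bar> / s) powr p x \<le> \<bar>f x\<bar> / s" if "\<bar>f x\<bar> / s \<le> 1"
      using that p(2)[OF x] \<mu> by (cases "f x = 0") (auto intro: powr_le_one_le simp: s_def)
    ultimately show ?thesis using p(2)[OF x] by (simp add: pw_def)
  qed
  moreover have "(\<integral>x. 1 / (\<mu> + 1) \<partial>lebesgue_on \<Omega>) = \<mu> / (\<mu> + 1)" by (simp add: \<mu>_def)
  ultimately have "s \<in> lux_scales \<Omega> p f"
    using \<mu> f(1) p(1) by (intro mem_lux_scales_if_AE_le[where b="\<lambda>_. 1 / (\<mu> + 1)"] AE_I2)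
      (auto simp: s_def add_pos_nonneg)
  then show ?thesis by blast
qed

lemma lux_scales_nonempty_if_continuous:
  fixes \<Omega> :: "(real^'n::finite) set"
  assumes "bounded \<Omega>" "\<Omega> \<in> sets lebesgue" "continuous_on UNIV f"
    and "p \<in> borel_measurable (lebesgue_on \<Omega>)" "\<And>x. x \<in> \<Omega> \<Longrightarrow> 1 \<le> p x"
  shows "lux_scales \<Omega> p f \<noteq> {}"
proof -
  have "compact (f ` closure \<Omega>)"
    using assms by (intro compact_continuous_image) (auto intro: continuous_on_subset)
  then obtain B where "\<And>x. x \<in> \<Omega> \<Longrightarrow> \<bar>f x\<bar> \<le> B"
    using closure_subset by (force dest!: compact_imp_bounded simp: bounded_iff)
  moreover have "f \<in> borel_measurable (lebesgue_on \<Omega>)"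
    using assms by (intro continuous_imp_measurable_on_sets_lebesgue) (auto intro: continuous_on_subset)
  ultimately show ?thesis using assms by (intro lux_scales_nonempty_if_bounded) auto
qed

definition scaled_modular :: "'a measure \<Rightarrow> ('j::finite \<Rightarrow> 'a \<Rightarrow> real) \<Rightarrow> ('j \<Rightarrow> 'a \<Rightarrow> real) \<Rightarrow> real \<Rightarrow> real"
  where "scaled_modular M W e s = (\<Sum>j\<in>UNIV. \<integral>x. W j x / s powr e j x \<partial>M)"

lemma integrable_divide_powr:
  fixes w e :: "'a \<Rightarrow> real"
  assumes w: "integrable M w" and e: "e \<in> borel_measurable M" "\<And>x. x \<in> space M \<Longrightarrow> 0 \<le> e x \<and> e x \<le> E"
    and s: "0 < s"
  shows "integrable M (\<lambda>x. w x / s powr e x)"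
proof (rule Bochner_Integration.integrable_bound)
  show "integrable M (\<lambda>x. \<bar>w x\<bar> / min 1 s powr E)" using w by simp
  show "(\<lambda>x. w x / s powr e x) \<in> borel_measurable M" using w e by measurable
  have "min 1 s powr E \<le> s powr e x" if "x \<in> space M" for x
  proof -
    have "min 1 s powr E \<le> min 1 s powr e x" using e(2)[OF that] s by (intro powr_mono') auto
    also have "\<dots> \<le> s powr e x" using e(2)[OF that] s by (intro powr_mono2) auto
    finally show ?thesis .
  qed
  then show "AE x in M. norm (w x / s powr e x) \<le> norm (\<bar>w x\<bar> / min 1 s powr E)"
    using s by (intro AE_I2) (simp add: abs_divide frac_le)
qed

lemma scaled_modular_le_one:
  fixes W e :: "'j::finite \<Rightarrow> 'a \<Rightarrow> real"
  assumes "\<And>j. integrable M (W j)" "\<And>j x. x \<in> space M \<Longrightarrow> 0 \<le> W j x"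
    and "\<And>j x. x \<in> space M \<Longrightarrow> 1 \<le> e j x"
  shows "scaled_modular M W e (1 + (\<Sum>j\<in>UNIV. \<integral>x. W j x \<partial>M)) \<le> 1"
proof -
  define s where "s = 1 + (\<Sum>j\<in>UNIV. \<integral>x. W j x \<partial>M)"
  have s: "1 \<le> s" using assms by (simp add: s_def sum_nonneg integral_nonneg)
  have "(\<integral>x. W j x / s powr e j x \<partial>M) \<le> (\<integral>x. W j x / s \<partial>M)" for j
  proof (rule integral_mono')
    fix x assume x: "x \<in> space M"
    have "s powr 1 \<le> s powr e j x" using s assms(3)[OF x] by (intro powr_mono) auto
    then show "W j x / s powr e j x \<le> W j x / s" using s assms(2)[OF x] by (intro divide_left_mono) auto
  qed (use assms s in auto)
  then have "scaled_modular M W e s \<le> (\<Sum>j\<in>UNIV. \<integral>x. W j x \<partial>M) / s"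
    unfolding scaled_modular_def sum_divide_distrib by (intro sum_mono) simp
  also have "\<dots> \<le> 1" using s by (simp add: s_def)
  finally show ?thesis by (simp add: s_def)
qed

lemma integral_le_powr_if_scaled_le_one:
  fixes w e :: "'a \<Rightarrow> real"
  assumes w: "integrable M w" "\<And>x. x \<in> space M \<Longrightarrow> 0 \<le> w x"
    and e: "e \<in> borel_measurable M" "\<And>x. x \<in> space M \<Longrightarrow> 0 \<le> e x \<and> e x \<le> E"
    and s: "0 < s" "s \<le> R" "1 \<le> R" and scaled: "(\<integral>x. w x / s powr e x \<partial>M) \<le> 1"
  shows "(\<integral>x. w x \<partial>M) \<le> R powr E"
proof -
  have "(\<integral>x. w x \<partial>M) \<le> (\<integral>x. R powr E * (w x / s powr e x) \<partial>M)"
  proof (rule integral_mono')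
    fix x assume x: "x \<in> space M"
    have "s powr e x \<le> R powr e x" using s e(2)[OF x] by (intro powr_mono2) auto
    also have "\<dots> \<le> R powr E" using s e(2)[OF x] by (intro powr_mono) auto
    finally have "w x \<le> R powr E / s powr e x * w x"
      using s w(2)[OF x] by (simp add: le_divide_eq mult.commute mult_left_mono)
    then show "w x \<le> R powr E * (w x / s powr e x)" by simp
  qed (use integrable_mult_right[OF integrable_divide_powr[OF w(1) e s(1)], of "R powr E"] w in auto)
  also have "\<dots> = R powr E * (\<integral>x. w x / s powr e x \<partial>M)" by (rule integral_mult_right_zero)
  also have "\<dots> \<le> R powr E" using scaled by (simp add: mult_left_le)
  finally show ?thesis .
qed

lemma integral_le_powr_if_Inf_scaled_modular_le:
  fixes W e :: "'j::finite \<Rightarrow> 'a \<Rightarrow> real"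
  assumes W: "\<And>j. integrable M (W j)" "\<And>j x. x \<in> space M \<Longrightarrow> 0 \<le> W j x"
    and e: "\<And>j. e j \<in> borel_measurable M" "\<And>j x. x \<in> space M \<Longrightarrow> 1 \<le> e j x \<and> e j x \<le> E"
    and Inf: "Inf {s. 0 < s \<and> scaled_modular M W e s \<le> 1} \<le> m"
  shows "(\<integral>x. W j x \<partial>M) \<le> max 1 (m + 1) powr E"
proof -
  let ?S = "{s. 0 < s \<and> scaled_modular M W e s \<le> 1}"
  have "1 + (\<Sum>j\<in>UNIV. \<integral>x. W j x \<partial>M) \<in> ?S"
    using scaled_modular_le_one[of M W e] W e by (auto simp: add_pos_nonneg sum_nonneg)
  then have "Inf ?S < m + 1" "bdd_below ?S" using Inf by (auto intro: bdd_belowI[of _ 0])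
  then obtain s where s: "0 < s" "s < m + 1" "scaled_modular M W e s \<le> 1"
    using \<open>_ \<in> ?S\<close> by (subst (asm) cInf_less_iff) auto
  have "(\<integral>x. W j x / s powr e j x \<partial>M) \<le> scaled_modular M W e s"
    unfolding scaled_modular_def using W(2) by (intro member_le_sum integral_nonneg) auto
  then show ?thesis using s W e
    by (intro integral_le_powr_if_scaled_le_one[where e="e j" and s=s]) (auto, meson order_trans zero_le_one)
qed

lemma pw_scaled_flux_eq:
  fixes a d s p :: real
  assumes "0 \<le> a" "0 < s" "2 \<le> p"
  shows "pw \<bar>pw a (p / (p - 1) * (p - 2) / (p / (p - 1))) * d / pw s (p / (p - 1) * (p - 2) / (p / (p - 1)) + 1)\<bar> (p / (p - 1))
       = flux_power p a d / s powr p"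
proof -
  define q where "q = p / (p - 1)"
  have q: "0 < q" "q * (p - 1) = p" using assms by (auto simp: q_def)
  have "\<bar>pw a (p - 2) * d / pw s (p - 2 + 1)\<bar> = (pw a (p - 2) * \<bar>d\<bar>) / s powr (p - 1)"
    using assms by (simp add: abs_mult pw_nonneg pw_def)
  moreover have "pw ((pw a (p - 2) * \<bar>d\<bar>) / s powr (p - 1)) q = pw (pw a (p - 2) * \<bar>d\<bar>) q / s powr p"
    using assms q by (simp add: pw_divide pw_nonneg powr_powr mult.commute[of "p - 1"])
  moreover have "pw (pw a (p - 2) * \<bar>d\<bar>) q = flux_power p a d"
    using assms q by (simp add: pw_mult_pw flux_power_def q_def)
  moreover have "q * (p - 2) / q = p - 2" using q by simp
  ultimately show ?thesis by (simp add: q_def)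
qed

text \<open>Index \<open>None\<close> carries the weight \<open>|u|\<^sup>\<alpha>\<close>, index \<open>Some i\<close> the weight \<open>||u|\<^sup>p\<^sup>0\<^sup>-\<^sup>2 D\<^sub>i u|\<^sup>q\<^sup>0\<close>.\<close>
lemma S_pnorm_eq_Inf_scaled_modular:
  assumes "\<forall>x\<in>\<Omega>. 2 \<le> p0 x"
  shows "S_pnorm \<Omega> (\<lambda>x. (p0 x / (p0 x - 1)) * (p0 x - 2)) (\<lambda>x. p0 x / (p0 x - 1)) \<alpha> u Du
    = Inf {s. 0 < s \<and> scaled_modular (lebesgue_on \<Omega>)
        (case_option (\<lambda>x. pw \<bar>u x\<bar> (\<alpha> x)) (\<lambda>i x. flux_power (p0 x) \<bar>u x\<bar> (Du i x)))
        (case_option \<alpha> (\<lambda>i. p0)) s \<le> 1}"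
  unfolding S_pnorm_def scaled_modular_def
proof (intro arg_cong[where f=Inf] Collect_cong conj_cong[OF refl] arg_cong[where f="\<lambda>t. t \<le> 1"], goal_cases)
  case (1 s)
  then have s: "0 < s" by simp
  have "(\<integral>x. pw (\<bar>u x\<bar> / s) (\<alpha> x) \<partial>lebesgue_on \<Omega>) = (\<integral>x. pw \<bar>u x\<bar> (\<alpha> x) / s powr \<alpha> x \<partial>lebesgue_on \<Omega>)"
    using s by (simp add: pw_divide)
  moreover have "(\<integral>x. pw \<bar>pw \<bar>u x\<bar> (p0 x / (p0 x - 1) * (p0 x - 2) / (p0 x / (p0 x - 1))) * Du i x
        / pw s (p0 x / (p0 x - 1) * (p0 x - 2) / (p0 x / (p0 x - 1)) + 1)\<bar> (p0 x / (p0 x - 1)) \<partial>lebesgue_on \<Omega>)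
      = (\<integral>x. flux_power (p0 x) \<bar>u x\<bar> (Du i x) / s powr p0 x \<partial>lebesgue_on \<Omega>)" for i
    using s assms by (intro Bochner_Integration.integral_cong refl pw_scaled_flux_eq) auto
  ultimately show ?case
    by (simp add: UNIV_option_conv sum.reindex)
qed

lemma S_mem_modulars_le:
  fixes \<Omega> :: "(real^'n::finite) set"
  assumes S: "S_mem \<Omega> (\<lambda>x. (p0 x / (p0 x - 1)) * (p0 x - 2)) (\<lambda>x. p0 x / (p0 x - 1)) \<alpha> u Du"
    and M: "S_pnorm \<Omega> (\<lambda>x. (p0 x / (p0 x - 1)) * (p0 x - 2)) (\<lambda>x. p0 x / (p0 x - 1)) \<alpha> u Du \<le> M"
    and p0: "p0 \<in> borel_measurable (lebesgue_on \<Omega>)" "\<forall>x\<in>\<Omega>. 2 \<le> p0 x \<and> p0 x \<le> E"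
    and \<alpha>: "\<alpha> \<in> borel_measurable (lebesgue_on \<Omega>)" "\<forall>x\<in>\<Omega>. 1 \<le> \<alpha> x \<and> \<alpha> x \<le> E"
  shows "(\<integral>x. pw \<bar>u x\<bar> (\<alpha> x) \<partial>lebesgue_on \<Omega>) \<le> max 1 (M + 1) powr E"
    and "(\<integral>x. flux_power (p0 x) \<bar>u x\<bar> (Du i x) \<partial>lebesgue_on \<Omega>) \<le> max 1 (M + 1) powr E"
proof -
  let ?W = "case_option (\<lambda>x. pw \<bar>u x\<bar> (\<alpha> x)) (\<lambda>i x. flux_power (p0 x) \<bar>u x\<bar> (Du i x))"
  have "(\<integral>x. ?W j x \<partial>lebesgue_on \<Omega>) \<le> max 1 (M + 1) powr E" for j
  proof (rule integral_le_powr_if_Inf_scaled_modular_le[where e="case_option \<alpha> (\<lambda>i. p0)"])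
    show "Inf {s. 0 < s \<and> scaled_modular (lebesgue_on \<Omega>) ?W (case_option \<alpha> (\<lambda>i. p0)) s \<le> 1} \<le> M"
      using M by (subst (asm) S_pnorm_eq_Inf_scaled_modular) (use p0(2) in auto)
  qed (use S p0 \<alpha> in \<open>auto simp: S_mem_def flux_power_def pw_nonneg split: option.split\<close>)
  from this[of None] this[of "Some i"] show "(\<integral>x. pw \<bar>u x\<bar> (\<alpha> x) \<partial>lebesgue_on \<Omega>) \<le> max 1 (M + 1) powr E"
    and "(\<integral>x. flux_power (p0 x) \<bar>u x\<bar> (Du i x) \<partial>lebesgue_on \<Omega>) \<le> max 1 (M + 1) powr E"
    by simp_all
qed

lemma test_fun_differentiable: "test_fun \<Omega> \<phi> \<Longrightarrow> \<phi> differentiable (at x)"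
  unfolding test_fun_def smooth_fun_def by (metis iter_pd.simps(1))

lemma test_fun_pd_differentiable: "test_fun \<Omega> \<phi> \<Longrightarrow> pd i \<phi> differentiable (at x)"
  unfolding test_fun_def smooth_fun_def by (metis iter_pd.simps)

lemma continuous_on_test_fun: "test_fun \<Omega> \<phi> \<Longrightarrow> continuous_on UNIV \<phi>"
  by (meson continuous_at_imp_continuous_on differentiable_imp_continuous_within test_fun_differentiable)

lemma continuous_on_pd_test_fun: "test_fun \<Omega> \<phi> \<Longrightarrow> continuous_on UNIV (pd i \<phi>)"
  by (meson continuous_at_imp_continuous_on differentiable_imp_continuous_within test_fun_pd_differentiable)

lemma pd_lincomb:
  assumes "test_fun \<Omega> \<phi>" "test_fun \<Omega> \<psi>"
  shows "pd i (\<lambda>x. a * \<phi> x + b * \<psi> x) x = a * pd i \<phi> x + b * pd i \<psi> x"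
proof -
  have "((\<lambda>x. a * \<phi> x + b * \<psi> x) has_derivative
        (\<lambda>h. a * frechet_derivative \<phi> (at x) h + b * frechet_derivative \<psi> (at x) h)) (at x)"
    using assms by (intro has_derivative_add has_derivative_mult_right frechet_derivative_works[THEN iffD1]
        test_fun_differentiable)
  from frechet_derivative_at[OF this] show ?thesis
    unfolding pd_def by (metis (no_types))
qed

lemma abs_integral_flux_mult_le_lux:
  fixes \<Omega> :: "(real^'n::finite) set"
  assumes p: "p \<in> borel_measurable (lebesgue_on \<Omega>)" "\<forall>x\<in>\<Omega>. 2 \<le> p x"
    and meas: "u \<in> borel_measurable (lebesgue_on \<Omega>)" "d \<in> borel_measurable (lebesgue_on \<Omega>)"
      "\<psi> \<in> borel_measurable (lebesgue_on \<Omega>)"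
    and flux: "integrable (lebesgue_on \<Omega>) (\<lambda>x. flux_power (p x) \<bar>u x\<bar> (d x))"
    and scales: "lux_scales \<Omega> p \<psi> \<noteq> {}"
  shows "integrable (lebesgue_on \<Omega>) (\<lambda>x. pw \<bar>u x\<bar> (p x - 2) * d x * \<psi> x)"
    and "\<bar>\<integral>x. pw \<bar>u x\<bar> (p x - 2) * d x * \<psi> x \<partial>lebesgue_on \<Omega>\<bar>
      \<le> lux \<Omega> p \<psi> * ((\<integral>x. flux_power (p x) \<bar>u x\<bar> (d x) \<partial>lebesgue_on \<Omega>) + 1)"
proof -
  let ?f = "\<lambda>x. pw \<bar>u x\<bar> (p x - 2) * d x * \<psi> x"
  let ?F = "\<integral>x. flux_power (p x) \<bar>u x\<bar> (d x) \<partial>lebesgue_on \<Omega>"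
  have bound: "integrable (lebesgue_on \<Omega>) ?f \<and> \<bar>\<integral>x. ?f x \<partial>lebesgue_on \<Omega>\<bar> \<le> s * (?F + 1)"
    if s: "s \<in> lux_scales \<Omega> p \<psi>" for s
  proof -
    define b where "b = (\<lambda>x. s * (flux_power (p x) \<bar>u x\<bar> (d x) + pw (\<bar>\<psi> x\<bar> / s) (p x)))"
    have s0: "0 < s" and Li: "integrable (lebesgue_on \<Omega>) (\<lambda>x. pw (\<bar>\<psi> x\<bar> / s) (p x))"
      and Ll: "(\<integral>x. pw (\<bar>\<psi> x\<bar> / s) (p x) \<partial>lebesgue_on \<Omega>) \<le> 1"
      using s unfolding lux_scales_def by auto
    have b: "integrable (lebesgue_on \<Omega>) b" using flux Li by (simp add: b_def)
    have pt: "\<bar>?f x\<bar> \<le> b x" if "x \<in> space (lebesgue_on \<Omega>)" for x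
      using abs_flux_mult_le[of "\<bar>u x\<bar>" s "p x" "d x" "\<psi> x"] s0 p(2) that by (simp add: b_def)
    have int: "integrable (lebesgue_on \<Omega>) ?f"
      using pt p meas by (intro Bochner_Integration.integrable_bound[OF b]) (auto intro!: AE_I2 order_trans[OF _ abs_ge_self])
    have "\<bar>\<integral>x. ?f x \<partial>lebesgue_on \<Omega>\<bar> \<le> (\<integral>x. b x \<partial>lebesgue_on \<Omega>)"
      by (rule integral_abs_bound_integral[OF int b pt])
    also have "\<dots> = s * (?F + (\<integral>x. pw (\<bar>\<psi> x\<bar> / s) (p x) \<partial>lebesgue_on \<Omega>))"
      using flux Li by (simp add: b_def)
    also have "\<dots> \<le> s * (?F + 1)" using Ll s0 by simp
    finally show ?thesis using int by blast
  qed
  then show "integrable (lebesgue_on \<Omega>) ?f" using scales by blast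
  have "0 \<le> ?F" by (simp add: flux_power_nonneg)
  then show "\<bar>\<integral>x. ?f x \<partial>lebesgue_on \<Omega>\<bar> \<le> lux \<Omega> p \<psi> * (?F + 1)"
    using bound scales by (intro le_lux_mult) auto
qed

context
  fixes \<Omega> :: "(real^'n::finite) set" and p u :: "real^'n \<Rightarrow> real" and Du :: "'n \<Rightarrow> real^'n \<Rightarrow> real"
  assumes \<Omega>: "bounded \<Omega>" "\<Omega> \<in> sets lebesgue"
    and p: "p \<in> borel_measurable (lebesgue_on \<Omega>)" "\<forall>x\<in>\<Omega>. 2 \<le> p x"
    and u: "u \<in> borel_measurable (lebesgue_on \<Omega>)"
    and Du: "\<And>i. Du i \<in> borel_measurable (lebesgue_on \<Omega>)"
      "\<And>i. integrable (lebesgue_on \<Omega>) (\<lambda>x. flux_power (p x) \<bar>u x\<bar> (Du i x))"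
begin

lemma measurable_lux_scales_nonempty_if_continuous:
  assumes "continuous_on UNIV \<psi>"
  shows "\<psi> \<in> borel_measurable (lebesgue_on \<Omega>)" "lux_scales \<Omega> p \<psi> \<noteq> {}"
proof -
  show "\<psi> \<in> borel_measurable (lebesgue_on \<Omega>)"
    by (rule continuous_imp_measurable_on_sets_lebesgue[OF continuous_on_subset[OF assms subset_UNIV] \<Omega>(2)])
  have "1 \<le> p x" if "x \<in> \<Omega>" for x using p(2) that by force
  then show "lux_scales \<Omega> p \<psi> \<noteq> {}"
    by (rule lux_scales_nonempty_if_continuous[OF \<Omega> assms p(1)])
qed

lemma integrable_bounded_flux_mult_pd:
  assumes "test_fun \<Omega> \<phi>"
  shows "integrable (lebesgue_on \<Omega>) (\<lambda>x. pw \<bar>u x\<bar> (p x - 2) * Du i x * pd i \<phi> x)"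
    and "\<bar>\<integral>x. pw \<bar>u x\<bar> (p x - 2) * Du i x * pd i \<phi> x \<partial>lebesgue_on \<Omega>\<bar>
      \<le> lux \<Omega> p (pd i \<phi>) * ((\<integral>x. flux_power (p x) \<bar>u x\<bar> (Du i x) \<partial>lebesgue_on \<Omega>) + 1)"
  using abs_integral_flux_mult_le_lux[OF p u Du(1) _ Du(2)] continuous_on_pd_test_fun[OF assms]
    measurable_lux_scales_nonempty_if_continuous by blast+

lemma flux_functional_lincomb:
  assumes "test_fun \<Omega> \<phi>" "test_fun \<Omega> \<psi>"
  shows "(\<Sum>i\<in>UNIV. \<integral>x. pw \<bar>u x\<bar> (p x - 2) * Du i x * pd i (\<lambda>x. a * \<phi> x + b * \<psi> x) x \<partial>lebesgue_on \<Omega>)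
    = a * (\<Sum>i\<in>UNIV. \<integral>x. pw \<bar>u x\<bar> (p x - 2) * Du i x * pd i \<phi> x \<partial>lebesgue_on \<Omega>)
      + b * (\<Sum>i\<in>UNIV. \<integral>x. pw \<bar>u x\<bar> (p x - 2) * Du i x * pd i \<psi> x \<partial>lebesgue_on \<Omega>)"
proof -
  have "(\<integral>x. pw \<bar>u x\<bar> (p x - 2) * Du i x * pd i (\<lambda>x. a * \<phi> x + b * \<psi> x) x \<partial>lebesgue_on \<Omega>)
    = (\<integral>x. a * (pw \<bar>u x\<bar> (p x - 2) * Du i x * pd i \<phi> x)
        + b * (pw \<bar>u x\<bar> (p x - 2) * Du i x * pd i \<psi> x) \<partial>lebesgue_on \<Omega>)" for i
    by (simp add: pd_lincomb[OF assms] algebra_simps)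
  then show ?thesis
    using integrable_bounded_flux_mult_pd(1)[OF assms(1)] integrable_bounded_flux_mult_pd(1)[OF assms(2)]
    by (simp add: sum.distrib sum_distrib_left)
qed

lemma abs_flux_functional_le:
  assumes \<phi>: "test_fun \<Omega> \<phi>" and C: "\<And>i. (\<integral>x. flux_power (p x) \<bar>u x\<bar> (Du i x) \<partial>lebesgue_on \<Omega>) \<le> C"
  shows "\<bar>\<Sum>i\<in>UNIV. \<integral>x. pw \<bar>u x\<bar> (p x - 2) * Du i x * pd i \<phi> x \<partial>lebesgue_on \<Omega>\<bar>
    \<le> (C + 1) * sob_norm \<Omega> p \<phi>"
proof -
  have lux: "0 \<le> lux \<Omega> p \<psi>" if "continuous_on UNIV \<psi>" for \<psi>
    using lux_nonneg measurable_lux_scales_nonempty_if_continuous(2)[OF that] by blast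
  have "0 \<le> (\<integral>x. flux_power (p x) \<bar>u x\<bar> (Du i x) \<partial>lebesgue_on \<Omega>)" for i
    by (simp add: integral_nonneg flux_power_nonneg)
  then have C0: "0 \<le> C" using C order_trans by blast
  have each: "\<bar>\<integral>x. pw \<bar>u x\<bar> (p x - 2) * Du i x * pd i \<phi> x \<partial>lebesgue_on \<Omega>\<bar> \<le> lux \<Omega> p (pd i \<phi>) * (C + 1)"
    for i
    using integrable_bounded_flux_mult_pd(2)[OF \<phi>, of i] mult_left_mono[OF add_right_mono[OF C[of i]]]
      lux[OF continuous_on_pd_test_fun[OF \<phi>]] by (meson order_trans)
  have "\<bar>\<Sum>i\<in>UNIV. \<integral>x. pw \<bar>u x\<bar> (p x - 2) * Du i x * pd i \<phi> x \<partial>lebesgue_on \<Omega>\<bar>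
      \<le> (\<Sum>i\<in>UNIV. lux \<Omega> p (pd i \<phi>) * (C + 1))"
    using each by (intro order_trans[OF sum_abs sum_mono])
  also have "\<dots> = (C + 1) * (\<Sum>i\<in>UNIV. lux \<Omega> p (pd i \<phi>))"
    by (simp add: sum_distrib_left mult.commute)
  also have "\<dots> \<le> (C + 1) * sob_norm \<Omega> p \<phi>"
    using lux[OF continuous_on_test_fun[OF \<phi>]] C0 by (intro mult_left_mono) (auto simp: sob_norm_def)
  finally show ?thesis .
qed

end

lemma Lvar_lux_caratheodory_le:
  fixes \<Omega> :: "(real^'n::finite) set" and c :: "real^'n \<Rightarrow> real \<Rightarrow> real"
  assumes \<Omega>: "\<Omega> \<in> sets lebesgue"
    and c_meas: "\<And>\<tau>. (\<lambda>x. c x \<tau>) \<in> borel_measurable (lebesgue_on \<Omega>)"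
    and c_cont: "AE x in lebesgue_on \<Omega>. continuous_on UNIV (c x)"
    and growth: "AE x in lebesgue_on \<Omega>. \<forall>\<tau>. \<bar>c x \<tau>\<bar> \<le> c0 x * pw \<bar>\<tau>\<bar> (\<alpha> x - 1) + c1 x"
    and c0: "AE x in lebesgue_on \<Omega>. \<bar>c0 x\<bar> \<le> C0"
    and c1: "\<forall>x\<in>\<Omega>. 0 \<le> c1 x" "0 < s1"
      "integrable (lebesgue_on \<Omega>) (\<lambda>x. pw (\<bar>c1 x\<bar> / s1) (\<alpha> x / (\<alpha> x - 1)))"
    and \<alpha>: "\<alpha> \<in> borel_measurable (lebesgue_on \<Omega>)" "\<forall>x\<in>\<Omega>. 2 \<le> \<alpha> x"
    and u: "u \<in> borel_measurable (lebesgue_on \<Omega>)" "integrable (lebesgue_on \<Omega>) (\<lambda>x. pw \<bar>u x\<bar> (\<alpha> x))"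
      "(\<integral>x. pw \<bar>u x\<bar> (\<alpha> x) \<partial>lebesgue_on \<Omega>) \<le> Cu"
  shows "Lvar \<Omega> (\<lambda>x. \<alpha> x / (\<alpha> x - 1)) (\<lambda>x. c x (u x))"
    and "lux \<Omega> (\<lambda>x. \<alpha> x / (\<alpha> x - 1)) (\<lambda>x. c x (u x))
      \<le> (1 + 4 * ((max 1 C0)\<^sup>2 * Cu + (\<integral>x. pw (\<bar>c1 x\<bar> / s1) (\<alpha> x / (\<alpha> x - 1)) \<partial>lebesgue_on \<Omega>)))
        * max 1 s1"
proof -
  let ?r = "\<lambda>x. \<alpha> x / (\<alpha> x - 1)"
  let ?g = "\<lambda>x. c x (u x)"
  define J where "J = (\<integral>x. pw (\<bar>c1 x\<bar> / s1) (?r x) \<partial>lebesgue_on \<Omega>)"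
  define lam where "lam = 1 + 4 * ((max 1 C0)\<^sup>2 * Cu + J)"
  define b where "b = (\<lambda>x. 4 * ((max 1 C0)\<^sup>2 * pw \<bar>u x\<bar> (\<alpha> x) + pw (\<bar>c1 x\<bar> / s1) (?r x)) / lam)"
  have "0 \<le> J" "0 \<le> (\<integral>x. pw \<bar>u x\<bar> (\<alpha> x) \<partial>lebesgue_on \<Omega>)"
    by (simp_all add: J_def integral_nonneg pw_nonneg)
  then have nonneg: "0 \<le> J" "0 \<le> Cu" and lam: "1 \<le> lam" using u(3) by (auto simp: lam_def)
  have g: "?g \<in> borel_measurable (lebesgue_on \<Omega>)"
    by (rule borel_measurable_caratheodory[OF \<Omega> c_meas c_cont u(1)])
  have "AE x in lebesgue_on \<Omega>. x \<in> \<Omega>" by (rule AE_I2) simp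
  with growth c0 have "AE x in lebesgue_on \<Omega>. pw (\<bar>?g x\<bar> / (lam * max 1 s1)) (?r x) \<le> b x"
  proof eventually_elim
    case (elim x)
    have "c0 x \<le> max 1 C0" using elim(2) by linarith
    from growth_modular_le[OF elim(1)[rule_format, of "u x"] this _ abs_ge_zero
        c1(1)[rule_format, OF elim(3)] \<alpha>(2)[rule_format, OF elim(3)] c1(2) lam]
    show ?case by (simp add: b_def abs_of_nonneg[OF c1(1)[rule_format, OF elim(3)]])
  qed
  moreover have "integrable (lebesgue_on \<Omega>) b" using u(2) c1(3) by (simp add: b_def)
  moreover have "(\<integral>x. b x \<partial>lebesgue_on \<Omega>) \<le> 1"
  proof -
    have "(max 1 C0)\<^sup>2 * (\<integral>x. pw \<bar>u x\<bar> (\<alpha> x) \<partial>lebesgue_on \<Omega>) \<le> (max 1 C0)\<^sup>2 * Cu"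
      using u(3) by (intro mult_left_mono) auto
    then have "(\<integral>x. b x \<partial>lebesgue_on \<Omega>) \<le> 4 * ((max 1 C0)\<^sup>2 * Cu + J) / lam"
      using u(2) c1(3) lam by (simp add: b_def J_def divide_right_mono)
    also have "\<dots> \<le> 1"
      using nonneg unfolding lam_def by (simp add: divide_le_eq add_nonneg_nonneg add_pos_nonneg)
    finally show ?thesis .
  qed
  moreover have "?r \<in> borel_measurable (lebesgue_on \<Omega>)" using \<alpha>(1) by measurable
  moreover have "0 < lam * max 1 s1" using lam by simp
  ultimately have "lam * max 1 s1 \<in> lux_scales \<Omega> ?r ?g"
    using g by (blast intro: mem_lux_scales_if_AE_le)
  then show "Lvar \<Omega> ?r ?g" and "lux \<Omega> ?r ?g \<le> (1 + 4 * ((max 1 C0)\<^sup>2 * Cu + J)) * max 1 s1"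
    using g by (auto simp: Lvar_def lux_scales_def lam_def intro!: lux_le)
qed

lemma S0_mem_measurable_integrable:
  fixes \<Omega> :: "(real^'n::finite) set"
  assumes "open \<Omega>" "S0_mem \<Omega> (\<lambda>x. (p0 x / (p0 x - 1)) * (p0 x - 2)) (\<lambda>x. p0 x / (p0 x - 1)) \<alpha> u Du"
  shows "u \<in> borel_measurable (lebesgue_on \<Omega>)" "Du i \<in> borel_measurable (lebesgue_on \<Omega>)"
    and "integrable (lebesgue_on \<Omega>) (\<lambda>x. pw \<bar>u x\<bar> (\<alpha> x))"
    and "integrable (lebesgue_on \<Omega>) (\<lambda>x. flux_power (p0 x) \<bar>u x\<bar> (Du i x))"
proof -
  show "Du i \<in> borel_measurable (lebesgue_on \<Omega>)"
    using assms(2) by (intro borel_measurable_if_weak_deriv_zero_ext[OF assms(1), of i u]) (simp add: S0_mem_def)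
qed (use assms(2) in \<open>simp_all add: S0_mem_def S_mem_def flux_power_def borel_measurable_integrable\<close>)

theorem lemma4p3:
  fixes \<Omega> :: "(real^'n) set"
    and p0 p1 \<alpha> c0 c1 c2 :: "real^'n \<Rightarrow> real"
    and c :: "real^'n \<Rightarrow> real \<Rightarrow> real"
  assumes dim: "CARD('n) \<ge> 3"
    and dom: "bounded \<Omega>" "lipschitz_domain \<Omega>"
    and p0_meas: "p0 \<in> borel_measurable (lebesgue_on \<Omega>)"
    and p0_bd: "\<forall>x\<in>\<Omega>. 2 \<le> p0 x" "\<exists>P. \<forall>x\<in>\<Omega>. p0 x \<le> P"
    and p0_C1: "continuous_on (closure \<Omega>) p0"
       "\<exists>G :: real^'n \<Rightarrow> real^'n. continuous_on (closure \<Omega>) G \<and>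
           (\<forall>x\<in>\<Omega>. (p0 has_derivative (\<lambda>h. G x \<bullet> h)) (at x))"
    and p1_meas: "p1 \<in> borel_measurable (lebesgue_on \<Omega>)"
    and p1_bd: "\<exists>m>1. \<forall>x\<in>\<Omega>. m \<le> p1 x" "\<exists>P. \<forall>x\<in>\<Omega>. p1 x \<le> P"
    and p1_C0: "continuous_on (closure \<Omega>) p1"
    and \<alpha>_meas: "\<alpha> \<in> borel_measurable (lebesgue_on \<Omega>)"
    and \<alpha>_bd: "\<forall>x\<in>\<Omega>. 1 \<le> \<alpha> x" "\<exists>A. \<forall>x\<in>\<Omega>. \<alpha> x \<le> A"
    and \<alpha>_p0: "\<exists>\<epsilon>>0. \<forall>x\<in>\<Omega>. p0 x + \<epsilon> \<le> \<alpha> x"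
    and c_car: "\<forall>\<tau>. (\<lambda>x. c x \<tau>) \<in> borel_measurable (lebesgue_on \<Omega>)"
       "AE x in lebesgue_on \<Omega>. continuous_on UNIV (c x)"
    and c_growth: "AE x in lebesgue_on \<Omega>. \<forall>\<tau>. \<bar>c x \<tau>\<bar> \<le> c0 x * pw \<bar>\<tau>\<bar> (\<alpha> x - 1) + c1 x"
    and c_coerc: "AE x in lebesgue_on \<Omega>. \<forall>\<tau>. c x \<tau> * \<tau> \<ge> c2 x * pw \<bar>\<tau>\<bar> (\<alpha> x)"
    and c0_Linf: "c0 \<in> borel_measurable (lebesgue_on \<Omega>)" "\<exists>C. AE x in lebesgue_on \<Omega>. \<bar>c0 x\<bar> \<le> C"
    and c2_Linf: "c2 \<in> borel_measurable (lebesgue_on \<Omega>)" "\<exists>C. AE x in lebesgue_on \<Omega>. \<bar>c2 x\<bar> \<le> C"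
    and c1_L: "Lvar \<Omega> (\<lambda>x. \<alpha> x / (\<alpha> x - 1)) c1" "\<forall>x\<in>\<Omega>. c1 x \<ge> 0"
    and c2_pos: "\<exists>Ct>0. AE x in lebesgue_on \<Omega>. c2 x \<ge> Ct"
  shows "\<forall>M. \<exists>K. \<forall>u Du.
     S0_mem \<Omega> (\<lambda>x. (p0 x / (p0 x - 1)) * (p0 x - 2)) (\<lambda>x. p0 x / (p0 x - 1)) \<alpha> u Du \<and>
     S_pnorm \<Omega> (\<lambda>x. (p0 x / (p0 x - 1)) * (p0 x - 2)) (\<lambda>x. p0 x / (p0 x - 1)) \<alpha> u Du \<le> M
     \<longrightarrow> (\<exists>(f :: (real^'n \<Rightarrow> real) \<Rightarrow> real) g Kf.
            (\<forall>\<phi> \<psi> a b. test_fun \<Omega> \<phi> \<and> test_fun \<Omega> \<psi> \<longrightarrow>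
                f (\<lambda>x. a * \<phi> x + b * \<psi> x) = a * f \<phi> + b * f \<psi>) \<and>
            (\<forall>\<phi>. test_fun \<Omega> \<phi> \<longrightarrow> \<bar>f \<phi>\<bar> \<le> Kf * sob_norm \<Omega> p0 \<phi>) \<and>
            Lvar \<Omega> (\<lambda>x. \<alpha> x / (\<alpha> x - 1)) g \<and>
            Kf + lux \<Omega> (\<lambda>x. \<alpha> x / (\<alpha> x - 1)) g \<le> K \<and>
            (\<forall>\<phi>. test_fun \<Omega> \<phi> \<longrightarrow>
               (\<Sum>i\<in>UNIV. \<integral>x. pw \<bar>u x\<bar> (p0 x - 2) * Du i x * pd i \<phi> x \<partial>lebesgue_on \<Omega>)
               + (\<integral>x. c x (u x) * \<phi> x \<partial>lebesgue_on \<Omega>)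
               = f \<phi> + (\<integral>x. g x * \<phi> x \<partial>lebesgue_on \<Omega>)))"
proof -
  have \<Omega>: "open \<Omega>" "\<Omega> \<in> sets lebesgue"
    using dom(2) by (auto simp: lipschitz_domain_def borel_open)
  obtain \<epsilon> where "0 < \<epsilon>" "\<forall>x\<in>\<Omega>. p0 x + \<epsilon> \<le> \<alpha> x" using \<alpha>_p0 by blast
  then have \<alpha>_2: "\<forall>x\<in>\<Omega>. 2 \<le> \<alpha> x" using p0_bd(1) by (meson add_increasing2 less_imp_le order_trans)
  obtain P A where E: "\<forall>x\<in>\<Omega>. p0 x \<le> P" "\<forall>x\<in>\<Omega>. \<alpha> x \<le> A" using p0_bd(2) \<alpha>_bd(2) by blast
  obtain C0 where C0: "AE x in lebesgue_on \<Omega>. \<bar>c0 x\<bar> \<le> C0" using c0_Linf(2) by blast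
  obtain s1 where s1: "0 < s1" "integrable (lebesgue_on \<Omega>) (\<lambda>x. pw (\<bar>c1 x\<bar> / s1) (\<alpha> x / (\<alpha> x - 1)))"
    using c1_L(1) unfolding Lvar_def by blast
  have p0E: "\<forall>x\<in>\<Omega>. 2 \<le> p0 x \<and> p0 x \<le> max P A" and \<alpha>E: "\<forall>x\<in>\<Omega>. 1 \<le> \<alpha> x \<and> \<alpha> x \<le> max P A"
    using p0_bd(1) \<alpha>_2 E by (auto simp: le_max_iff_disj)
  define K where "K M = max 1 (M + 1) powr max P A + 1 + (1 + 4 * ((max 1 C0)\<^sup>2
    * max 1 (M + 1) powr max P A + (\<integral>x. pw (\<bar>c1 x\<bar> / s1) (\<alpha> x / (\<alpha> x - 1)) \<partial>lebesgue_on \<Omega>))) * max 1 s1"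
    for M
  show ?thesis
  proof (intro allI, goal_cases)
    case (1 M)
    show ?case
    proof (intro exI[of _ "K M"] allI impI, goal_cases)
      case (1 u Du)
      note u = S0_mem_measurable_integrable[OF \<Omega>(1) 1[THEN conjunct1]]
      note modulars = S_mem_modulars_le[OF 1[unfolded S0_mem_def, THEN conjunct1, THEN conjunct1]
          1[THEN conjunct2] p0_meas p0E \<alpha>_meas \<alpha>E]
      note nemytskii = Lvar_lux_caratheodory_le[OF \<Omega>(2) c_car[rule_format] c_growth C0
          c1_L(2) s1 \<alpha>_meas \<alpha>_2 u(1,3) modulars(1)]
      note flux_functional = flux_functional_lincomb abs_flux_functional_le
      note flux_functional = flux_functional[of \<Omega> p0 u Du, OF dom(1) \<Omega>(2) p0_meas p0_bd(1) u(1,2,4)]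
      show ?case
      proof (intro exI[of _ "\<lambda>\<phi>. \<Sum>i\<in>UNIV. \<integral>x. pw \<bar>u x\<bar> (p0 x - 2) * Du i x * pd i \<phi> x \<partial>lebesgue_on \<Omega>"]
          exI[of _ "\<lambda>x. c x (u x)"] exI[of _ "max 1 (M + 1) powr max P A + 1"] conjI allI impI, goal_cases)
        case 1 then show ?case using flux_functional(1) by blast
      next
        case 2 then show ?case by (rule flux_functional(2)[OF _ modulars(2)])
      next
        case 3 show ?case by (rule nemytskii(1))
      next
        case 4 show ?case using nemytskii(2) by (simp add: K_def)
      qed simp
    qed
  qed
qed

end
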